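(* Let $\alpha>\frac12$ and run Algorithm 1 with $x_0=0$, gradients satisfying $\|g_t\|\le G$, and learning rates $\eta_t=\frac{1}{Gt^\alpha}$. Then for every $T\ge0$, $$S_T\le\sqrt{5+\tfrac{1}{2\alpha-1}},\qquad Q_T\le\ln\Big(5+\tfrac{1}{2\alpha-1}\Big),$$ and for every $T\ge1$ and $u\in\mathbb{R}^d$, $$\phi_T(u)\le\sqrt{5+\tfrac{1}{2\alpha-1}}\;\|u\|\Big[2\ln(1+2\|u\|)+9\sqrt{5+\tfrac{1}{2\alpha-1}}\Big].$$
   Context: $\|\cdot\|$ is the Euclidean norm, $G>0$. Auxiliary functions: $\psi^*(\theta,S,Q)=\exp\big(\max_{\beta\in[-1/2,1/2]}(\theta\beta-\beta^2S^2)-Q\big)$ for $\theta\in\mathbb{R},S>0,Q\ge0$; $\psi(x,S,Q)=\sup_{\theta\in\mathbb{R}}(\theta x-\psi^*(\theta,S,Q))$. Algorithm 1 with $x_0=0$: $S_0^2=4$, $Q_0=0$, $\theta_0=0$. For $t=1,2,\dots$: $\phi_t(x)=\psi(\|x\|,S_{t-1},Q_{t-1})$; $x_t$ is the unique minimizer of $\phi_t(x)-\langle\theta_{t-1},x\rangle$; receive $g_t$; $\ell_t=\eta_tg_t$, $S_t^2=S_{t-1}^2+\|\ell_t\|^2$ ($S_t>0$), $Q_t=Q_{t-1}+\|\ell_t\|^2/S_t^2$, $\theta_t=\theta_{t-1}-\ell_t$. *)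

theory Defs
  imports "HOL-Analysis.Analysis"
begin

definition psi_star :: "real \<Rightarrow> real \<Rightarrow> real \<Rightarrow> real" where
  "psi_star \<theta> S Q = exp (Sup ((\<lambda>\<beta>. \<theta> * \<beta> - \<beta>\<^sup>2 * S\<^sup>2) ` {-1/2..1/2}) - Q)"

definition psi :: "real \<Rightarrow> real \<Rightarrow> real \<Rightarrow> real" where
  "psi x S Q = Sup (range (\<lambda>\<theta>. \<theta> * x - psi_star \<theta> S Q))"

text \<open>Algorithm 1 state. Rounds t = 1,2,...; g t is the gradient received at round t,
  \<eta> t the learning rate; \<ell>_t = \<eta>_t g_t.\<close>
fun alg_Ssq :: "(nat \<Rightarrow> real) \<Rightarrow> (nat \<Rightarrow> 'a::real_normed_vector) \<Rightarrow> nat \<Rightarrow> real" where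
  "alg_Ssq \<eta> g 0 = 4"
| "alg_Ssq \<eta> g (Suc t) = alg_Ssq \<eta> g t + (norm (\<eta> (Suc t) *\<^sub>R g (Suc t)))\<^sup>2"

definition alg_S :: "(nat \<Rightarrow> real) \<Rightarrow> (nat \<Rightarrow> 'a::real_normed_vector) \<Rightarrow> nat \<Rightarrow> real" where
  "alg_S \<eta> g t = sqrt (alg_Ssq \<eta> g t)"

fun alg_Q :: "(nat \<Rightarrow> real) \<Rightarrow> (nat \<Rightarrow> 'a::real_normed_vector) \<Rightarrow> nat \<Rightarrow> real" where
  "alg_Q \<eta> g 0 = 0"
| "alg_Q \<eta> g (Suc t) = alg_Q \<eta> g t
     + (norm (\<eta> (Suc t) *\<^sub>R g (Suc t)))\<^sup>2 / (alg_S \<eta> g (Suc t))\<^sup>2"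

definition alg_phi :: "(nat \<Rightarrow> real) \<Rightarrow> (nat \<Rightarrow> 'a::real_normed_vector) \<Rightarrow> nat \<Rightarrow> 'a \<Rightarrow> real" where
  "alg_phi \<eta> g t x = psi (norm x) (alg_S \<eta> g (t - 1)) (alg_Q \<eta> g (t - 1))"

end

theory Submission
  imports Defs
begin

text \<open>Since the rates satisfy |\<ell>_t|^2 \<le> t powr (-2\<alpha>), the quantity S_T^2 = 4 + \<Sum> |\<ell>_t|^2
  is at most 4 + \<Sum> t powr (-2\<alpha>) \<le> 5 + 1/(2\<alpha>-1), the sum being compared with an integral
  through the convexity of t powr (1-2\<alpha>). Each increment |\<ell>_t|^2/S_t^2 of Q is at most
  ln (S_t^2/S_(t-1)^2), so Q_T telescopes to at most ln (S_T^2/4). Finally, taking \<beta> = 1/2 in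
  psi_star gives psi_star \<theta> S Q \<ge> exp (\<theta>/2 - S^2/4 - Q), so psi is dominated by the
  convex conjugate of an exponential, which grows like x ln x.\<close>

lemma powr_diff_ge_tangent:
  fixes p x y :: real
  assumes p: "p \<ge> 1" and x: "0 < x" and y: "0 < y"
  shows "(p - 1) * y powr (- p) * (y - x) \<le> x powr (1 - p) - y powr (1 - p)"
proof -
  have deriv: "((\<lambda>t. t powr (1 - p)) has_real_derivative (1 - p) * t powr (- p)) (at t)"
    if "0 < t" for t :: real
    using has_real_derivative_powr[OF that, of "1 - p"] by simp
  have convex: "convex_on {0<..} (\<lambda>t::real. t powr (1 - p))"
  proof (rule convex_on_realI[where f' = "\<lambda>t. (1 - p) * t powr (- p)"])
    show "(1 - p) * s powr (- p) \<le> (1 - p) * t powr (- p)"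
      if "s \<in> {0<..}" "t \<in> {0<..}" "s \<le> t" for s t
      using that p by (intro mult_left_mono_neg powr_mono2') auto
  qed (use deriv in auto)
  have "(1 - p) * y powr (- p) * (x - y) \<le> x powr (1 - p) - y powr (1 - p)"
    using x y deriv[OF y]
    by (intro convex_on_imp_above_tangent[OF convex])
      (auto simp: interior_open has_field_derivative_at_within)
  then show ?thesis by (simp add: algebra_simps)
qed

lemma sum_powr_neg_le:
  fixes p :: real
  assumes p: "p > 1"
  shows "(\<Sum>k=1..n. real k powr (- p)) \<le> p / (p - 1)"
proof -
  have "(p - 1) * (\<Sum>k=1..n. real k powr (- p)) \<le> p - real n powr (1 - p)"
  proof (induction n)
    case (Suc n)
    show ?case
    proof (cases "n = 0")
      case False
      have "(p - 1) * real (Suc n) powr (- p) \<le> real n powr (1 - p) - real (Suc n) powr (1 - p)"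
        using powr_diff_ge_tangent[of p "real n" "real (Suc n)"] p False by simp
      then show ?thesis using Suc.IH by (simp add: algebra_simps)
    qed simp
  qed (use p in simp)
  moreover have "0 \<le> real n powr (1 - p)" by simp
  ultimately have "(p - 1) * (\<Sum>k=1..n. real k powr (- p)) \<le> p" by linarith
  then show ?thesis using p by (simp add: pos_le_divide_eq mult.commute)
qed

lemma mult_le_exp_add_mult_ln:
  fixes x y :: real
  assumes x: "0 \<le> x"
  shows "x * y \<le> exp y + x * ln (1 + x)"
proof (cases "y \<le> ln (1 + x)")
  case True
  have "x * y \<le> x * ln (1 + x)" using x True by (intro mult_left_mono)
  then show ?thesis using exp_gt_zero[of y] by linarith
next
  case False
  define z where "z = y - ln (1 + x)"
  have z: "0 < z" using False by (simp add: z_def)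
  have "exp y = (1 + x) * exp z" using x by (simp add: z_def exp_diff)
  also have "\<dots> \<ge> (1 + x) * (1 + z)" using x by (intro mult_left_mono exp_ge_add_one_self) auto
  finally have "(1 + x) * (1 + z) \<le> exp y" .
  moreover have "x * z \<le> (1 + x) * (1 + z)" using x z by (simp add: algebra_simps)
  ultimately have "x * z \<le> exp y" by linarith
  then show ?thesis by (simp add: z_def algebra_simps)
qed

lemma psi_star_ge:
  fixes \<theta> S Q :: real
  shows "exp (\<theta> / 2 - S\<^sup>2 / 4 - Q) \<le> psi_star \<theta> S Q"
proof -
  let ?f = "\<lambda>\<beta>::real. \<theta> * \<beta> - \<beta>\<^sup>2 * S\<^sup>2"
  have "bdd_above (?f ` {-1/2..1/2})"
    by (intro bounded_imp_bdd_above compact_imp_bounded compact_continuous_image continuous_intros) auto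
  then have "?f (1/2) \<le> Sup (?f ` {-1/2..1/2})"
    by (intro cSup_upper[OF imageI]) auto
  then show ?thesis unfolding psi_star_def by (simp add: power2_eq_square)
qed

lemma psi_le:
  fixes x S Q :: real
  assumes x: "0 \<le> x"
  shows "psi x S Q \<le> 2 * x * (ln (1 + 2 * x) + S\<^sup>2 / 4 + Q)"
  unfolding psi_def
proof (rule cSup_least)
  fix v assume "v \<in> range (\<lambda>\<theta>. \<theta> * x - psi_star \<theta> S Q)"
  then obtain \<theta> where v: "v = \<theta> * x - psi_star \<theta> S Q" by auto
  define y where "y = \<theta> / 2 - S\<^sup>2 / 4 - Q"
  have "(2 * x) * y \<le> exp y + (2 * x) * ln (1 + 2 * x)"
    using x by (intro mult_le_exp_add_mult_ln) simp
  moreover have "exp y \<le> psi_star \<theta> S Q"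
    unfolding y_def by (rule psi_star_ge)
  ultimately show "v \<le> 2 * x * (ln (1 + 2 * x) + S\<^sup>2 / 4 + Q)"
    unfolding v y_def by (simp add: algebra_simps)
qed simp

lemma psi_le_sqrt_bound:
  fixes x S Q B :: real
  assumes x: "0 \<le> x" and S: "S\<^sup>2 \<le> B" and Q: "Q \<le> ln B" and B: "1 \<le> B"
  shows "psi x S Q \<le> sqrt B * x * (2 * ln (1 + 2 * x) + 9 * sqrt B)"
proof -
  have "0 \<le> x * (2 * ln (1 + 2 * x))" using x by simp
  then have "1 * (x * (2 * ln (1 + 2 * x))) \<le> sqrt B * (x * (2 * ln (1 + 2 * x)))"
    using B by (intro mult_right_mono) auto
  moreover have "S\<^sup>2 / 4 + Q \<le> 9 / 2 * B"
    using S Q ln_bound[of B] B by linarith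
  then have "2 * x * (S\<^sup>2 / 4 + Q) \<le> 2 * x * (9 / 2 * B)"
    using x by (intro mult_left_mono) auto
  ultimately have "2 * x * (ln (1 + 2 * x) + S\<^sup>2 / 4 + Q)
      \<le> sqrt B * x * (2 * ln (1 + 2 * x)) + 9 * x * (sqrt B * sqrt B)"
    using B by (simp add: algebra_simps)
  also have "\<dots> = sqrt B * x * (2 * ln (1 + 2 * x) + 9 * sqrt B)"
    by (simp add: algebra_simps)
  finally show ?thesis using psi_le[OF x, of S Q] by linarith
qed

lemma alg_Ssq_eq_sum: "alg_Ssq \<eta> g T = 4 + (\<Sum>t=1..T. (norm (\<eta> t *\<^sub>R g t))\<^sup>2)"
  by (induction T) simp_all

lemma alg_Ssq_ge_4: "4 \<le> alg_Ssq \<eta> g T"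
  by (simp add: alg_Ssq_eq_sum sum_nonneg)

lemma alg_S_sq: "(alg_S \<eta> g T)\<^sup>2 = alg_Ssq \<eta> g T"
  using alg_Ssq_ge_4[of \<eta> g T] unfolding alg_S_def by simp

lemma alg_Q_le_ln_Ssq: "alg_Q \<eta> g T \<le> ln (alg_Ssq \<eta> g T / 4)"
proof (induction T)
  case (Suc T)
  define s where "s = alg_Ssq \<eta> g T"
  define d where "d = (norm (\<eta> (Suc T) *\<^sub>R g (Suc T)))\<^sup>2"
  have s: "0 < s" using alg_Ssq_ge_4[of \<eta> g T] by (simp add: s_def)
  have d: "0 \<le> d" by (simp add: d_def)
  have Ssq: "alg_Ssq \<eta> g (Suc T) = s + d"
    by (simp add: s_def d_def)
  have "alg_Q \<eta> g (Suc T) = alg_Q \<eta> g T + d / (alg_S \<eta> g (Suc T))\<^sup>2"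
    by (simp add: d_def)
  then have Q: "alg_Q \<eta> g (Suc T) = alg_Q \<eta> g T + d / (s + d)"
    by (simp only: alg_S_sq Ssq)
  have "ln s - ln (s + d) \<le> (s - (s + d)) / (s + d)"
    using s d by (intro ln_diff_le) auto
  also have "\<dots> = - (d / (s + d))"
    by (simp add: field_simps)
  finally have "d / (s + d) \<le> ln ((s + d) / 4) - ln (s / 4)"
    using s d by (simp add: ln_div)
  then show ?case
    unfolding Q Ssq using Suc.IH by (simp add: s_def)
qed simp

lemma norm_scaleR_sq_le_powr:
  fixes G t \<alpha> :: real and v :: "'a::real_normed_vector"
  assumes G: "0 < G" and v: "norm v \<le> G" and t: "0 < t"
  shows "(norm ((1 / (G * t powr \<alpha>)) *\<^sub>R v))\<^sup>2 \<le> t powr (- (2 * \<alpha>))"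
proof -
  have "norm ((1 / (G * t powr \<alpha>)) *\<^sub>R v) = norm v / (G * t powr \<alpha>)"
    using G by simp
  also have "\<dots> \<le> G / (G * t powr \<alpha>)"
    using G t v by (intro divide_right_mono) auto
  also have "\<dots> = t powr (- \<alpha>)"
    using G by (simp add: powr_minus divide_inverse)
  finally have "(norm ((1 / (G * t powr \<alpha>)) *\<^sub>R v))\<^sup>2 \<le> (t powr (- \<alpha>))\<^sup>2"
    by (intro power_mono) auto
  also have "\<dots> = t powr (- (2 * \<alpha>))"
    by (simp add: power2_eq_square powr_add[symmetric])
  finally show ?thesis .
qed

lemma alg_Ssq_le:
  fixes \<alpha> G :: real and g :: "nat \<Rightarrow> 'a::real_normed_vector" and \<eta> :: "nat \<Rightarrow> real"
  assumes \<alpha>: "\<alpha> > 1/2" and G: "G > 0"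
    and g: "\<forall>t\<ge>1. norm (g t) \<le> G"
    and \<eta>: "\<forall>t\<ge>1. \<eta> t = 1 / (G * real t powr \<alpha>)"
  shows "alg_Ssq \<eta> g T \<le> 5 + 1 / (2*\<alpha> - 1)"
proof -
  have "(\<Sum>t=1..T. (norm (\<eta> t *\<^sub>R g t))\<^sup>2) \<le> (\<Sum>t=1..T. real t powr (- (2 * \<alpha>)))"
  proof (intro sum_mono)
    fix t assume "t \<in> {1..T}"
    then show "(norm (\<eta> t *\<^sub>R g t))\<^sup>2 \<le> real t powr (- (2 * \<alpha>))"
      using norm_scaleR_sq_le_powr[OF G, of "g t" "real t" \<alpha>] g \<eta> by simp
  qed
  also have "\<dots> \<le> 2 * \<alpha> / (2 * \<alpha> - 1)"
    using \<alpha> by (intro sum_powr_neg_le) simp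
  also have "\<dots> = 1 + 1 / (2 * \<alpha> - 1)"
    using \<alpha> by (simp add: field_simps)
  finally show ?thesis by (simp add: alg_Ssq_eq_sum)
qed

theorem lemma5:
  fixes \<alpha> G :: real and g :: "nat \<Rightarrow> 'a::euclidean_space" and \<eta> :: "nat \<Rightarrow> real"
  assumes "\<alpha> > 1/2" and "G > 0"
    and "\<forall>t\<ge>1. norm (g t) \<le> G"
    and "\<forall>t\<ge>1. \<eta> t = 1 / (G * real t powr \<alpha>)"
  shows "(\<forall>T. alg_S \<eta> g T \<le> sqrt (5 + 1 / (2*\<alpha> - 1))
             \<and> alg_Q \<eta> g T \<le> ln (5 + 1 / (2*\<alpha> - 1)))
       \<and> (\<forall>T\<ge>1. \<forall>u::'a. alg_phi \<eta> g T u \<le> sqrt (5 + 1 / (2*\<alpha> - 1)) * norm u *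
             (2 * ln (1 + 2 * norm u) + 9 * sqrt (5 + 1 / (2*\<alpha> - 1))))"
proof -
  define B where "B = 5 + 1 / (2*\<alpha> - 1)"
  have B: "1 \<le> B" using assms(1) by (simp add: B_def)
  have Ssq: "alg_Ssq \<eta> g T \<le> B" for T
    unfolding B_def using assms by (rule alg_Ssq_le)
  have S: "alg_S \<eta> g T \<le> sqrt B" for T
    using Ssq[of T] by (simp add: alg_S_def)
  have Q: "alg_Q \<eta> g T \<le> ln B" for T
  proof -
    have "ln (alg_Ssq \<eta> g T / 4) \<le> ln B"
      using alg_Ssq_ge_4[of \<eta> g T] Ssq[of T] by simp
    then show ?thesis using alg_Q_le_ln_Ssq[of \<eta> g T] by linarith
  qed
  have "alg_phi \<eta> g T u \<le> sqrt B * norm u * (2 * ln (1 + 2 * norm u) + 9 * sqrt B)" for T u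
    unfolding alg_phi_def using Ssq Q B by (intro psi_le_sqrt_bound) (simp_all add: alg_S_sq)
  with S Q show ?thesis unfolding B_def by simp
qed

end
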